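(* Let $k\ge1$, $1\le r\le4k^2$, and let $\overline{\mathcal{B}}(2k,2k;r)$ be the set of boards in $\mathcal{B}(2k,2k;r)$ whose board partition $(\lambda_1,\lambda_2,\lambda_3,\lambda_4)$ satisfies: $\lambda_1\ge\lambda_i$ for all $i>1$; $\lambda_2\ge\lambda_4$; if $\lambda_1=\lambda_2$ then $\lambda_3\ge\lambda_4$. For a board partition $\lambda=(\lambda_1,\lambda_2,\lambda_3,\lambda_4)$ of some board in $\overline{\mathcal{B}}(2k,2k;r)$, let $K\le D_4$ be the subgroup of symmetries preserving the set of all boards with board partition $\lambda$. Then: if $\lambda_1=\lambda_2=\lambda_3=\lambda_4$, $K=D_4$ and $[D_4:K]=1$; if $\lambda_1=\lambda_3>\lambda_2=\lambda_4$, $K=\langle D,D'\rangle$ and $[D_4:K]=2$; if $\lambda_1=\lambda_2>\lambda_3=\lambda_4$, $K=\langle V\rangle$ and $[D_4:K]=4$; if $\lambda_1=\lambda_3$ and $\lambda_2\ne\lambda_4$, $K=\langle D'\rangle$ and $[D_4:K]=4$; if $\lambda_2=\lambda_4$ and $\lambda_1\ne\lambda_3$, $K=\langle D\rangle$ and $[D_4:K]=4$; in all other cases $K$ is trivial and $[D_4:K]=8$.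
   Context: A $2k\times2k$ grid with cells $(i,j)$, rows $i$ numbered top to bottom, columns $j$ left to right; $\mathcal{B}(2k,2k;r)$ is the set of boards, i.e. subsets of exactly $r$ blocked cells. $D_4$ is the symmetry group of the square acting on boards: rotations $R_0,R_{90},R_{180},R_{270}$ about the center, $H$ = reflection across the horizontal midline, $V$ = reflection across the vertical midline, $D$ = reflection across the main diagonal from top-left to bottom-right ($(i,j)\mapsto(j,i)$), $D'$ = reflection across the anti-diagonal from bottom-left to top-right ($(i,j)\mapsto(2k+1-j,2k+1-i)$). Quadrants: $Q_1$ = rows $1..k$, cols $1..k$; $Q_2$ = rows $1..k$, cols $k+1..2k$; $Q_3$ = rows $k+1..2k$, cols $k+1..2k$; $Q_4$ = rows $k+1..2k$, cols $1..k$; the board partition is $(\lambda_1,\dots,\lambda_4)$ with $\lambda_i$ the number of blocked cells in $Q_i$. *)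

theory Defs
  imports Main
begin

type_synonym cell = "nat \<times> nat"

definition grid :: "nat \<Rightarrow> cell set" where
  "grid k = {1..2*k} \<times> {1..2*k}"

definition boards :: "nat \<Rightarrow> nat \<Rightarrow> cell set set" where
  "boards k r = {B. B \<subseteq> grid k \<and> card B = r}"

definition Q1 :: "nat \<Rightarrow> cell set" where "Q1 k = {1..k} \<times> {1..k}"
definition Q2 :: "nat \<Rightarrow> cell set" where "Q2 k = {1..k} \<times> {k+1..2*k}"
definition Q3 :: "nat \<Rightarrow> cell set" where "Q3 k = {k+1..2*k} \<times> {k+1..2*k}"
definition Q4 :: "nat \<Rightarrow> cell set" where "Q4 k = {k+1..2*k} \<times> {1..k}"

definition board_partition :: "nat \<Rightarrow> cell set \<Rightarrow> nat \<times> nat \<times> nat \<times> nat" where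
  "board_partition k B =
     (card (B \<inter> Q1 k), card (B \<inter> Q2 k), card (B \<inter> Q3 k), card (B \<inter> Q4 k))"

definition canonical_partition :: "nat \<times> nat \<times> nat \<times> nat \<Rightarrow> bool" where
  "canonical_partition lam = (case lam of (l1, l2, l3, l4) \<Rightarrow>
     l1 \<ge> l2 \<and> l1 \<ge> l3 \<and> l1 \<ge> l4 \<and> l2 \<ge> l4 \<and> (l1 = l2 \<longrightarrow> l3 \<ge> l4))"

definition boards_bar :: "nat \<Rightarrow> nat \<Rightarrow> cell set set" where
  "boards_bar k r = {B \<in> boards k r. canonical_partition (board_partition k B)}"

text \<open>The symmetries of the square, as maps on cells; outside the grid they act as
  the identity, so that composition of maps is the group operation of D4.\<close>
definition on_grid :: "nat \<Rightarrow> (cell \<Rightarrow> cell) \<Rightarrow> cell \<Rightarrow> cell" where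
  "on_grid k f c = (if c \<in> grid k then f c else c)"

definition R0 :: "nat \<Rightarrow> cell \<Rightarrow> cell" where "R0 k = id"
definition R90 :: "nat \<Rightarrow> cell \<Rightarrow> cell" where
  "R90 k = on_grid k (\<lambda>(i, j). (j, 2*k+1-i))"
definition R180 :: "nat \<Rightarrow> cell \<Rightarrow> cell" where
  "R180 k = on_grid k (\<lambda>(i, j). (2*k+1-i, 2*k+1-j))"
definition R270 :: "nat \<Rightarrow> cell \<Rightarrow> cell" where
  "R270 k = on_grid k (\<lambda>(i, j). (2*k+1-j, i))"
definition Hr :: "nat \<Rightarrow> cell \<Rightarrow> cell" where
  "Hr k = on_grid k (\<lambda>(i, j). (2*k+1-i, j))"
definition Vr :: "nat \<Rightarrow> cell \<Rightarrow> cell" where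
  "Vr k = on_grid k (\<lambda>(i, j). (i, 2*k+1-j))"
definition Dr :: "nat \<Rightarrow> cell \<Rightarrow> cell" where
  "Dr k = on_grid k (\<lambda>(i, j). (j, i))"
definition D'r :: "nat \<Rightarrow> cell \<Rightarrow> cell" where
  "D'r k = on_grid k (\<lambda>(i, j). (2*k+1-j, 2*k+1-i))"

definition d4 :: "nat \<Rightarrow> (cell \<Rightarrow> cell) set" where
  "d4 k = {R0 k, R90 k, R180 k, R270 k, Hr k, Vr k, Dr k, D'r k}"

inductive_set generated :: "(cell \<Rightarrow> cell) set \<Rightarrow> (cell \<Rightarrow> cell) set"
  for S where
  gen_id: "id \<in> generated S"
| gen_base: "g \<in> S \<Longrightarrow> g \<in> generated S"
| gen_comp: "g \<in> generated S \<Longrightarrow> h \<in> generated S \<Longrightarrow> g \<circ> h \<in> generated S"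

definition boards_with_partition ::
  "nat \<Rightarrow> nat \<Rightarrow> nat \<times> nat \<times> nat \<times> nat \<Rightarrow> cell set set" where
  "boards_with_partition k r lam = {B \<in> boards k r. board_partition k B = lam}"

definition stab :: "nat \<Rightarrow> nat \<Rightarrow> nat \<times> nat \<times> nat \<times> nat \<Rightarrow> (cell \<Rightarrow> cell) set" where
  "stab k r lam = {g \<in> d4 k. (\<lambda>B. g ` B) ` boards_with_partition k r lam
                              = boards_with_partition k r lam}"

definition d4_index :: "nat \<Rightarrow> (cell \<Rightarrow> cell) set \<Rightarrow> nat" where
  "d4_index k K = card (d4 k) div card K"

end

theory Submission imports Defs begin

(* Every symmetry of the square is a bijection of the grid that permutes the four quadrants,
   so it sends a board with partition (a, b, c, d) to a board whose partition is the
   corresponding permutation of (a, b, c, d); e.g. R90 gives (d, a, b, c). Acting injectively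
   on the finite set of boards with a given partition, a symmetry preserves that set exactly
   when its permutation fixes the partition. Reading off these fixing conditions for the eight
   symmetries and using the inequalities of a canonical partition identifies K in each case,
   and the index follows from |D4| = 8. *)

lemmas quadrant_defs = Q1_def Q2_def Q3_def Q4_def grid_def

lemmas d4_element_defs = R0_def R90_def R180_def R270_def Hr_def Vr_def Dr_def D'r_def on_grid_def

lemma d4_involutions:
  "R180 k \<circ> R180 k = id" "Hr k \<circ> Hr k = id" "Vr k \<circ> Vr k = id"
  "Dr k \<circ> Dr k = id" "D'r k \<circ> D'r k = id"
  by (rule ext; auto simp: d4_element_defs grid_def)+

lemma R90_R270_inverse: "R90 k \<circ> R270 k = id" "R270 k \<circ> R90 k = id"
  by (rule ext; auto simp: d4_element_defs grid_def)+

lemma Dr_D'r_commute: "Dr k \<circ> D'r k = R180 k" "D'r k \<circ> Dr k = R180 k"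
  by (rule ext; auto simp: d4_element_defs grid_def)+

lemma bij_d4: "g \<in> d4 k \<Longrightarrow> bij g"
  unfolding d4_def
  by (auto intro: o_bij d4_involutions R90_R270_inverse simp: R0_def)

lemma d4_maps_grid: "g \<in> d4 k \<Longrightarrow> g ` grid k \<subseteq> grid k"
  by (auto simp: d4_def d4_element_defs grid_def)

lemma card_image_Int_eq:
  assumes "inj_on g B" and "\<And>x. x \<in> B \<Longrightarrow> g x \<in> Q' \<longleftrightarrow> x \<in> Q"
  shows "card (g ` B \<inter> Q') = card (B \<inter> Q)"
proof -
  have "g ` B \<inter> Q' = g ` (B \<inter> Q)" using assms(2) by auto
  then show ?thesis using assms(1) by (simp add: card_image inj_on_Int)
qed

lemma board_partition_image:
  assumes "inj g" and "B \<subseteq> grid k"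
    and "\<And>x. x \<in> grid k \<Longrightarrow> g x \<in> Q1 k \<longleftrightarrow> x \<in> P1"
    and "\<And>x. x \<in> grid k \<Longrightarrow> g x \<in> Q2 k \<longleftrightarrow> x \<in> P2"
    and "\<And>x. x \<in> grid k \<Longrightarrow> g x \<in> Q3 k \<longleftrightarrow> x \<in> P3"
    and "\<And>x. x \<in> grid k \<Longrightarrow> g x \<in> Q4 k \<longleftrightarrow> x \<in> P4"
  shows "board_partition k (g ` B) = (card (B \<inter> P1), card (B \<inter> P2), card (B \<inter> P3), card (B \<inter> P4))"
  unfolding board_partition_def
  using assms by (auto intro!: card_image_Int_eq inj_on_subset[OF assms(1)])

lemma board_partition_d4_image:
  assumes "B \<subseteq> grid k" and "board_partition k B = (a, b, c, d)"
  shows "board_partition k (R0 k ` B) = (a, b, c, d)"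
    and "board_partition k (R90 k ` B) = (d, a, b, c)"
    and "board_partition k (R180 k ` B) = (c, d, a, b)"
    and "board_partition k (R270 k ` B) = (b, c, d, a)"
    and "board_partition k (Hr k ` B) = (d, c, b, a)"
    and "board_partition k (Vr k ` B) = (b, a, d, c)"
    and "board_partition k (Dr k ` B) = (a, d, c, b)"
    and "board_partition k (D'r k ` B) = (c, b, a, d)"
proof -
  have counts: "card (B \<inter> Q1 k) = a" "card (B \<inter> Q2 k) = b" "card (B \<inter> Q3 k) = c" "card (B \<inter> Q4 k) = d"
    using assms(2) by (simp_all add: board_partition_def)
  note image = board_partition_image[OF _ assms(1)]
  show "board_partition k (R0 k ` B) = (a, b, c, d)"
    using assms(2) by (simp add: R0_def)
  show "board_partition k (R90 k ` B) = (d, a, b, c)"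
    and "board_partition k (R180 k ` B) = (c, d, a, b)"
    and "board_partition k (R270 k ` B) = (b, c, d, a)"
    and "board_partition k (Hr k ` B) = (d, c, b, a)"
    and "board_partition k (Vr k ` B) = (b, a, d, c)"
    and "board_partition k (Dr k ` B) = (a, d, c, b)"
    and "board_partition k (D'r k ` B) = (c, b, a, d)"
    unfolding counts[symmetric]
    by ((rule image, rule bij_is_inj[OF bij_d4]); auto simp: d4_def d4_element_defs quadrant_defs)+
qed

lemma finite_boards_with_partition: "finite (boards_with_partition k r lam)"
  by (rule finite_subset[of _ "Pow (grid k)"]) (auto simp: boards_with_partition_def boards_def grid_def)

lemma mem_stab_iff:
  assumes "g \<in> d4 k" and B: "B \<in> boards_with_partition k r lam"
    and partition_image:
      "\<And>B. B \<subseteq> grid k \<Longrightarrow> board_partition k B = lam \<Longrightarrow> board_partition k (g ` B) = lam'"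
  shows "g \<in> stab k r lam \<longleftrightarrow> lam' = lam"
proof
  have "B \<subseteq> grid k" and "board_partition k B = lam"
    using B by (simp_all add: boards_with_partition_def boards_def)
  then have "board_partition k (g ` B) = lam'" by (rule partition_image)
  moreover assume "g \<in> stab k r lam"
  then have "g ` B \<in> boards_with_partition k r lam" using B by (auto simp: stab_def)
  ultimately show "lam' = lam" by (simp add: boards_with_partition_def)
next
  let ?W = "boards_with_partition k r lam"
  assume "lam' = lam"
  have inj: "inj g" using bij_d4[OF assms(1)] by (rule bij_is_inj)
  have "g ` B' \<in> ?W" if "B' \<in> ?W" for B'
  proof -
    have B': "B' \<subseteq> grid k" "card B' = r" "board_partition k B' = lam"
      using that by (simp_all add: boards_with_partition_def boards_def)
    have "g ` B' \<subseteq> grid k" using B'(1) d4_maps_grid[OF assms(1)] by blast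
    moreover have "card (g ` B') = r" using inj B'(2) by (simp add: card_image inj_on_subset)
    moreover have "board_partition k (g ` B') = lam"
      using partition_image[OF B'(1,3)] \<open>lam' = lam\<close> by simp
    ultimately show ?thesis by (simp add: boards_with_partition_def boards_def)
  qed
  then have "(\<lambda>B. g ` B) ` ?W \<subseteq> ?W" by blast
  moreover have "inj_on (\<lambda>B. g ` B) ?W"
    by (rule inj_onI) (simp add: inj_image_eq_iff[OF inj])
  ultimately have "(\<lambda>B. g ` B) ` ?W = ?W"
    by (rule endo_inj_surj[OF finite_boards_with_partition])
  then show "g \<in> stab k r lam" using assms(1) by (simp add: stab_def)
qed

lemma stab_eq:
  assumes "B \<in> boards k r" and "board_partition k B = (a, b, c, d)"
  shows "stab k r (a, b, c, d) =
    {g. g = id \<or> (g \<in> {R90 k, R270 k} \<and> a = b \<and> b = c \<and> c = d)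
      \<or> (g = R180 k \<and> a = c \<and> b = d) \<or> (g = Hr k \<and> a = d \<and> b = c)
      \<or> (g = Vr k \<and> a = b \<and> c = d) \<or> (g = Dr k \<and> b = d) \<or> (g = D'r k \<and> a = c)}"
    (is "_ = ?symmetries")
proof -
  have B: "B \<in> boards_with_partition k r (a, b, c, d)"
    using assms by (simp add: boards_with_partition_def)
  have in_d4: "R0 k \<in> d4 k" "R90 k \<in> d4 k" "R180 k \<in> d4 k" "R270 k \<in> d4 k"
    "Hr k \<in> d4 k" "Vr k \<in> d4 k" "Dr k \<in> d4 k" "D'r k \<in> d4 k"
    by (simp_all add: d4_def)
  have members:
    "id \<in> stab k r (a, b, c, d)"
    "R90 k \<in> stab k r (a, b, c, d) \<longleftrightarrow> a = b \<and> b = c \<and> c = d"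
    "R180 k \<in> stab k r (a, b, c, d) \<longleftrightarrow> a = c \<and> b = d"
    "R270 k \<in> stab k r (a, b, c, d) \<longleftrightarrow> a = b \<and> b = c \<and> c = d"
    "Hr k \<in> stab k r (a, b, c, d) \<longleftrightarrow> a = d \<and> b = c"
    "Vr k \<in> stab k r (a, b, c, d) \<longleftrightarrow> a = b \<and> c = d"
    "Dr k \<in> stab k r (a, b, c, d) \<longleftrightarrow> b = d"
    "D'r k \<in> stab k r (a, b, c, d) \<longleftrightarrow> a = c"
    using mem_stab_iff[OF in_d4(1) B board_partition_d4_image(1)]
      mem_stab_iff[OF in_d4(2) B board_partition_d4_image(2)]
      mem_stab_iff[OF in_d4(3) B board_partition_d4_image(3)]
      mem_stab_iff[OF in_d4(4) B board_partition_d4_image(4)]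
      mem_stab_iff[OF in_d4(5) B board_partition_d4_image(5)]
      mem_stab_iff[OF in_d4(6) B board_partition_d4_image(6)]
      mem_stab_iff[OF in_d4(7) B board_partition_d4_image(7)]
      mem_stab_iff[OF in_d4(8) B board_partition_d4_image(8)]
    by (simp_all add: R0_def) blast+
  have "stab k r (a, b, c, d) \<subseteq> d4 k" by (auto simp: stab_def)
  then show ?thesis
  proof (intro set_eqI iffI)
    fix g assume "g \<in> stab k r (a, b, c, d)"
    moreover from this have "g \<in> d4 k" using \<open>stab k r (a, b, c, d) \<subseteq> d4 k\<close> by blast
    ultimately show "g \<in> ?symmetries"
      unfolding d4_def R0_def by (elim insertE emptyE) (simp_all add: members)
  qed (use members in auto)
qed

lemma generated_involution:
  assumes "f \<circ> f = id"
  shows "generated {f} = {id, f}"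
proof
  have ff: "f (f x) = x" for x using comp_eq_dest_lhs[OF assms] by simp
  show "generated {f} \<subseteq> {id, f}"
  proof
    fix h assume "h \<in> generated {f}"
    then show "h \<in> {id, f}" by induct (auto simp: comp_def ff)
  qed
  show "{id, f} \<subseteq> generated {f}" by (auto intro: generated.intros)
qed

lemma generated_commuting_involutions:
  assumes "f \<circ> f = id" and "g \<circ> g = id" and "f \<circ> g = g \<circ> f"
  shows "generated {f, g} = {id, f, g, f \<circ> g}"
proof
  have ff: "f (f x) = x" and gg: "g (g x) = x" and gf: "g (f x) = f (g x)" for x
    using comp_eq_dest_lhs[OF assms(1)] comp_eq_dest_lhs[OF assms(2)] comp_eq_dest[OF assms(3)]
    by simp_all
  show "generated {f, g} \<subseteq> {id, f, g, f \<circ> g}"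
  proof
    fix h assume "h \<in> generated {f, g}"
    then show "h \<in> {id, f, g, f \<circ> g}" by induct (auto simp: comp_def ff gg gf)
  qed
  show "{id, f, g, f \<circ> g} \<subseteq> generated {f, g}" by (auto intro: generated.intros)
qed

lemma generated_d4_elements:
  "generated {Dr k} = {id, Dr k}" "generated {D'r k} = {id, D'r k}" "generated {Vr k} = {id, Vr k}"
  "generated {Dr k, D'r k} = {id, Dr k, D'r k, R180 k}"
  using generated_involution[OF d4_involutions(4)] generated_involution[OF d4_involutions(5)]
    generated_involution[OF d4_involutions(3)]
    generated_commuting_involutions[OF d4_involutions(4,5)]
  by (simp_all add: Dr_D'r_commute)

lemma distinct_d4:
  assumes "k \<ge> 1"
  shows "distinct [R0 k, R90 k, R180 k, R270 k, Hr k, Vr k, Dr k, D'r k]"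
proof -
  have "distinct (map (\<lambda>g. (g (1, 1), g (1, 2))) [R0 k, R90 k, R180 k, R270 k, Hr k, Vr k, Dr k, D'r k])"
    using assms by (simp add: d4_element_defs grid_def)
  then show ?thesis by (simp only: distinct_map)
qed

lemma card_d4_subgroups:
  assumes "k \<ge> 1"
  shows "card (d4 k) = 8" "card {id, Dr k, D'r k, R180 k} = 4"
    and "card {id, Dr k} = 2" "card {id, D'r k} = 2" "card {id, Vr k} = 2"
  using distinct_d4[OF assms] by (auto simp: d4_def R0_def)

lemma d4_index_eq: "k \<ge> 1 \<Longrightarrow> d4_index k K = 8 div card K"
  by (simp add: d4_index_def card_d4_subgroups(1))

theorem corollary4p2:
  fixes k r l1 l2 l3 l4 :: nat and B :: "cell set"
  assumes "k \<ge> 1" and "1 \<le> r" and "r \<le> 4 * k^2"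
    and "B \<in> boards_bar k r"
    and "board_partition k B = (l1, l2, l3, l4)"
  defines "K \<equiv> stab k r (l1, l2, l3, l4)"
  shows "(l1 = l2 \<and> l2 = l3 \<and> l3 = l4 \<longrightarrow>
            K = d4 k \<and> d4_index k K = 1)
       \<and> (l1 = l3 \<and> l3 > l2 \<and> l2 = l4 \<longrightarrow>
            K = generated {Dr k, D'r k} \<and> d4_index k K = 2)
       \<and> (l1 = l2 \<and> l2 > l3 \<and> l3 = l4 \<longrightarrow>
            K = generated {Vr k} \<and> d4_index k K = 4)
       \<and> (l1 = l3 \<and> l2 \<noteq> l4 \<longrightarrow>
            K = generated {D'r k} \<and> d4_index k K = 4)
       \<and> (l2 = l4 \<and> l1 \<noteq> l3 \<longrightarrow>
            K = generated {Dr k} \<and> d4_index k K = 4)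
       \<and> (\<not> (l1 = l2 \<and> l2 = l3 \<and> l3 = l4) \<and> \<not> (l1 = l3 \<and> l3 > l2 \<and> l2 = l4)
          \<and> \<not> (l1 = l2 \<and> l2 > l3 \<and> l3 = l4) \<and> \<not> (l1 = l3 \<and> l2 \<noteq> l4)
          \<and> \<not> (l2 = l4 \<and> l1 \<noteq> l3) \<longrightarrow>
            K = {id} \<and> d4_index k K = 8)"
proof -
  have B: "B \<in> boards k r" and "canonical_partition (l1, l2, l3, l4)"
    using assms(4,5) by (auto simp: boards_bar_def)
  then have canonical: "l2 \<le> l1" "l3 \<le> l1" "l4 \<le> l2"
    by (auto simp: canonical_partition_def)
  note K = stab_eq[OF B assms(5), folded K_def]
  note group_facts = d4_index_eq[OF assms(1)] card_d4_subgroups[OF assms(1)] generated_d4_elements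
  show ?thesis
  proof (intro conjI impI)
    assume "l1 = l2 \<and> l2 = l3 \<and> l3 = l4"
    then have "K = d4 k" by (auto simp: K d4_def R0_def)
    then show "K = d4 k" "d4_index k K = 1" by (simp_all add: group_facts)
  next
    assume "l1 = l3 \<and> l3 > l2 \<and> l2 = l4"
    then have "K = {id, Dr k, D'r k, R180 k}" by (auto simp: K)
    then show "K = generated {Dr k, D'r k}" "d4_index k K = 2" by (simp_all add: group_facts)
  next
    assume "l1 = l2 \<and> l2 > l3 \<and> l3 = l4"
    then have "K = {id, Vr k}" by (auto simp: K)
    then show "K = generated {Vr k}" "d4_index k K = 4" by (simp_all add: group_facts)
  next
    assume "l1 = l3 \<and> l2 \<noteq> l4"
    then have "K = {id, D'r k}" by (auto simp: K)
    then show "K = generated {D'r k}" "d4_index k K = 4" by (simp_all add: group_facts)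
  next
    assume "l2 = l4 \<and> l1 \<noteq> l3"
    then have "K = {id, Dr k}" by (auto simp: K)
    then show "K = generated {Dr k}" "d4_index k K = 4" by (simp_all add: group_facts)
  next
    assume "\<not> (l1 = l2 \<and> l2 = l3 \<and> l3 = l4) \<and> \<not> (l1 = l3 \<and> l3 > l2 \<and> l2 = l4)
      \<and> \<not> (l1 = l2 \<and> l2 > l3 \<and> l3 = l4) \<and> \<not> (l1 = l3 \<and> l2 \<noteq> l4)
      \<and> \<not> (l2 = l4 \<and> l1 \<noteq> l3)"
    then have "l1 \<noteq> l3" "l2 \<noteq> l4" "l1 \<noteq> l4" "\<not> (l1 = l2 \<and> l3 = l4)"
      using canonical by (auto simp: not_less_iff_gr_or_eq)
    then have "K = {id}" by (auto simp: K)
    then show "K = {id}" "d4_index k K = 8" by (simp_all add: group_facts)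
  qed
qed

end
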